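(* Let $a,b,c,d>0$, $\mu\in(0,1]$, $u\ge0$, and consider on $\mathcal{I}=[0,1]^2$ the controlled system $$\dot x=x(1-x)\big[xr(-c+d-a+b)+x(a-b)-r(d+b)+b+u\big]+\mu(1-2x),\qquad \dot r=r(1-r)(2x-1).$$ If $u>(c+d)/2$, then on the side $\mathcal{B}_t=\{(x,1):x\in[0,1]\}$ there exists an equilibrium $(x_t^*,1)$ with $x_t^*\in(1/2,1)$, and all other equilibria on $\mathcal{B}_t$ (if any) lie in $\{(x,1):x\in(0,1/2)\}$. *)

theory Defs
  imports Complex_Main
begin

definition xdot :: "real \<Rightarrow> real \<Rightarrow> real \<Rightarrow> real \<Rightarrow> real \<Rightarrow> real \<Rightarrow> real \<Rightarrow> real \<Rightarrow> real" where
  "xdot a b c d \<mu> u x r =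
     x * (1 - x) * (x * r * (- c + d - a + b) + x * (a - b) - r * (d + b) + b + u)
     + \<mu> * (1 - 2 * x)"

definition rdot :: "real \<Rightarrow> real \<Rightarrow> real" where
  "rdot x r = r * (1 - r) * (2 * x - 1)"

definition equilibrium :: "real \<Rightarrow> real \<Rightarrow> real \<Rightarrow> real \<Rightarrow> real \<Rightarrow> real \<Rightarrow> real \<Rightarrow> real \<Rightarrow> bool" where
  "equilibrium a b c d \<mu> u x r \<longleftrightarrow>
     x \<in> {0..1} \<and> r \<in> {0..1} \<and> xdot a b c d \<mu> u x r = 0 \<and> rdot x r = 0"

end

theory Submission
  imports Defs
begin

text \<open>
  On the top side \<open>r = 1\<close> the equation for \<open>r\<close> holds trivially, and with
  \<open>k = u - (c + d)/2 > 0\<close> the equation for \<open>x\<close> becomes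
  \<open>g x = x (1 - x) ((d - c)(x - 1/2) + k) - 2 \<mu> (x - 1/2) = 0\<close>, independently of \<open>a, b\<close>.
  Since \<open>g 0 = \<mu>\<close>, \<open>g (1/2) = k/4\<close> and \<open>g 1 = -\<mu>\<close>, the intermediate value theorem
  gives a root in \<open>(1/2, 1)\<close> and excludes the points \<open>0, 1/2, 1\<close>. On \<open>(1/2, 1)\<close>,
  dividing by \<open>x (1 - x) (x - 1/2) > 0\<close> turns \<open>g x\<close> into
  \<open>(d - c) + k/(x - 1/2) - 2 \<mu>/(x (1 - x))\<close>, which is strictly decreasing;
  so that root is the only one there.
\<close>

lemma xdot_top_side:
  "xdot a b c d \<mu> u x 1 = x * (1 - x) * ((d - c) * (x - 1/2) + (u - (c + d) / 2)) - 2 * \<mu> * (x - 1/2)"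
  unfolding xdot_def by (simp add: field_simps)

lemma equilibrium_top_side_iff:
  "equilibrium a b c d \<mu> u x 1 \<longleftrightarrow> x \<in> {0..1} \<and> xdot a b c d \<mu> u x 1 = 0"
  unfolding equilibrium_def rdot_def by simp

lemma xdot_top_side_at_0: "xdot a b c d \<mu> u 0 1 = \<mu>"
  unfolding xdot_def by simp

lemma xdot_top_side_at_half: "xdot a b c d \<mu> u (1/2) 1 = (u - (c + d) / 2) / 4"
  unfolding xdot_top_side by simp

lemma xdot_top_side_at_1: "xdot a b c d \<mu> u 1 1 = - \<mu>"
  unfolding xdot_def by simp

lemma continuous_on_xdot_top_side: "continuous_on A (\<lambda>x. xdot a b c d \<mu> u x 1)"
  unfolding xdot_def by (intro continuous_intros)

lemma xdot_top_side_divided: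
  assumes "1/2 < x" "x < 1"
  shows "xdot a b c d \<mu> u x 1 / (x * (1 - x) * (x - 1/2))
           = (d - c) + (u - (c + d) / 2) / (x - 1/2) - 2 * \<mu> / (x * (1 - x))"
proof -
  have divide_out: "(p * (s * t + k) - m * t) / (p * t) = s + k / t - m / p"
    if "p \<noteq> 0" "t \<noteq> 0" for p t s k m :: real
    using that by (simp add: field_simps)
  have "x * (1 - x) \<noteq> 0" "x - 1/2 \<noteq> 0"
    using assms by auto
  from divide_out[OF this, of "d - c" "u - (c + d) / 2" "2 * \<mu>"] show ?thesis
    unfolding xdot_top_side by (simp add: mult.assoc)
qed

lemma top_side_quotient_strict_decreasing:
  fixes k s \<mu> x y :: real
  assumes "k > 0" "\<mu> \<ge> 0" "1/2 < x" "x < y" "y < 1"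
  shows "s + k / (y - 1/2) - 2 * \<mu> / (y * (1 - y)) < s + k / (x - 1/2) - 2 * \<mu> / (x * (1 - x))"
proof -
  have "(y - x) * (x + y - 1) > 0" "y * (1 - y) > 0"
    using assms by (auto intro!: mult_pos_pos)
  moreover have "x * (1 - x) - y * (1 - y) = (y - x) * (x + y - 1)"
    by (simp add: algebra_simps)
  ultimately have "y * (1 - y) < x * (1 - x)" "0 < x * (1 - x) * (y * (1 - y))"
    by (simp_all add: mult_pos_pos)
  then have "2 * \<mu> / (x * (1 - x)) \<le> 2 * \<mu> / (y * (1 - y))"
    using assms by (intro divide_left_mono) auto
  moreover have "k / (y - 1/2) < k / (x - 1/2)"
    using assms by (intro divide_strict_left_mono) auto
  ultimately show ?thesis by linarith
qed

lemma xdot_top_side_root_unique: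
  assumes "u > (c + d) / 2" "\<mu> \<ge> 0"
    and "x \<in> {1/2<..<1}" "y \<in> {1/2<..<1}"
    and "xdot a b c d \<mu> u x 1 = 0" "xdot a b c d \<mu> u y 1 = 0"
  shows "x = y"
proof -
  define q where "q z = (d - c) + (u - (c + d) / 2) / (z - 1/2) - 2 * \<mu> / (z * (1 - z))" for z
  have q_zero: "q z = 0" if "z \<in> {1/2<..<1}" "xdot a b c d \<mu> u z 1 = 0" for z
    using xdot_top_side_divided[of z a b c d \<mu> u] that unfolding q_def by auto
  have q_less: "q z' < q z" if "z \<in> {1/2<..<1}" "z < z'" "z' < 1" for z z'
    using top_side_quotient_strict_decreasing[of "u - (c + d) / 2" \<mu> z z' "d - c"] assms that
    unfolding q_def by auto
  show "x = y"
    using q_less[of x y] q_less[of y x] q_zero[of x] q_zero[of y] assms(3-6)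
    by (cases x y rule: linorder_cases) auto
qed

lemma xdot_top_side_root_exists:
  assumes "u > (c + d) / 2" "\<mu> > 0"
  shows "\<exists>x \<in> {1/2<..<1}. xdot a b c d \<mu> u x 1 = 0"
proof -
  have half: "xdot a b c d \<mu> u (1/2) 1 > 0" and one: "xdot a b c d \<mu> u 1 1 < 0"
    using assms by (simp_all add: xdot_top_side_at_half xdot_top_side_at_1)
  obtain x where "1/2 \<le> x" "x \<le> 1" "xdot a b c d \<mu> u x 1 = 0"
    using IVT2'[OF less_imp_le[OF one] less_imp_le[OF half] _ continuous_on_xdot_top_side] by auto
  moreover from this have "x \<noteq> 1/2" "x \<noteq> 1"
    using half one by (metis less_irrefl)+
  ultimately show ?thesis by auto
qed

theorem lemma18:
  fixes a b c d \<mu> u :: real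
  assumes "a > 0" "b > 0" "c > 0" "d > 0"
    and "\<mu> > 0" "\<mu> \<le> 1" "u \<ge> 0"
    and "u > (c + d) / 2"
  shows "\<exists>xt. xt \<in> {1/2<..<1} \<and> equilibrium a b c d \<mu> u xt 1 \<and>
           (\<forall>x. equilibrium a b c d \<mu> u x 1 \<and> x \<noteq> xt \<longrightarrow> x \<in> {0<..<1/2})"
proof -
  obtain xt where xt: "xt \<in> {1/2<..<1}" "xdot a b c d \<mu> u xt 1 = 0"
    using xdot_top_side_root_exists assms by blast
  have "x \<in> {0<..<1/2}" if "equilibrium a b c d \<mu> u x 1" "x \<noteq> xt" for x
  proof -
    have x: "x \<in> {0..1}" "xdot a b c d \<mu> u x 1 = 0"
      using that equilibrium_top_side_iff by auto
    moreover have "xdot a b c d \<mu> u 0 1 \<noteq> 0" "xdot a b c d \<mu> u (1/2) 1 \<noteq> 0"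
      "xdot a b c d \<mu> u 1 1 \<noteq> 0"
      using assms by (simp_all add: xdot_top_side_at_0 xdot_top_side_at_half xdot_top_side_at_1)
    ultimately have "x \<noteq> 0" "x \<noteq> 1/2" "x \<noteq> 1"
      by metis+
    moreover have "x \<notin> {1/2<..<1}"
      using xdot_top_side_root_unique[of c d u \<mu> x xt] assms x xt \<open>x \<noteq> xt\<close> by auto
    ultimately show ?thesis using x by auto
  qed
  then show ?thesis
    using xt equilibrium_top_side_iff by (intro exI[of _ xt]) auto
qed

end
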